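(* Let $n$ be a positive integer and let $\mu,\nu:\{1,\dots,n\}\to[0,\infty)$ be non-negative functions with $\|\mu\|_1\le 1$ and $\|\nu\|_1\le 1$. Let $\eta,\delta>0$. Let $X=\{f\in\mathbb{R}^n: |f(x)|\le\max\{\mu(x),\nu(x)\}\text{ for every }x\}$ and let $\|\cdot\|$ be a QAP-norm on $\mathbb{R}^n$ with respect to $X$, with associated operator $\mathcal{D}$, function $c$ and function $C$ (see context). Let $J:\mathbb{R}\to\mathbb{R}$ be $J(x)=(x+|x|)/2$, and let $$\epsilon=\frac{\delta}{2\rho'\bigl(C(1)c(\eta)^{-1},\,c(\eta)^{-1},\,\delta/4,\,J\bigr)}.$$ Suppose that $\|\mu-\nu\|\le\epsilon$. Then for every function $f$ with $0\le f\le\mu$ (pointwise) there exists a function $g$ such that $0\le g\le(1-\delta)^{-1}\nu$ (pointwise) and $\|f-g\|\le\eta$.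
   Context: Functions in $\mathbb{R}^n$ are viewed as functions on $\{1,\dots,n\}$ with inner product $\langle f,g\rangle=\frac1n\sum_x f(x)g(x)$ and $\|f\|_p=(\frac1n\sum_x|f(x)|^p)^{1/p}$, $\|f\|_\infty=\max_x|f(x)|$. For a norm $\|\cdot\|$ its dual norm is $\|\phi\|^*=\max\{\langle f,\phi\rangle:\|f\|\le1\}$. Products of functions are pointwise. QAP-norm: let $\|\cdot\|$ be a norm on $\mathbb{R}^n$ with $\|f\|_\infty\le\|f\|^*$ for all $f$, and let $X$ be a bounded subset of $\mathbb{R}^n$. Then $\|\cdot\|$ is a QAP-norm with respect to $X$ if there exist a (non-linear) map $\mathcal{D}:\mathbb{R}^n\to\mathbb{R}^n$, a strictly increasing function $c:\mathbb{R}_+\to\mathbb{R}_+$ and an increasing function $C:\mathbb{N}\to\mathbb{R}$ such that (i) $\langle f,\mathcal{D}f\rangle\le1$ for every $f\in X$; (ii) $\langle f,\mathcal{D}f\rangle\ge c(\epsilon)$ for every $f\in X$ with $\|f\|\ge\epsilon$; (iii) $\|\mathcal{D}f_1\cdots\mathcal{D}f_K\|^*\le C(K)$ for all $K$ and all $f_1,\dots,f_K\in X$. It is assumed that the functions $\mathcal{D}f$, $f\in X$, span $\mathbb{R}^n$. For a real polynomial $P(x)=a_mx^m+\dots+a_1x+a_0$ let $R'_P(x)=C(m)|a_m|x^m+\dots+C(1)|a_1|x+|a_0|$. For continuous $J:\mathbb{R}\to\mathbb{R}$ and $C_1,C_2,\delta>0$, $\rho'(C_1,C_2,\delta,J)$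 is twice the infimum of $R'_P(C_2)$ over all real polynomials $P$ with $|P(x)-J(x)|\le\delta$ for all $x\in[-C_1,C_1]$. *)

theory Defs
  imports "HOL-Analysis.Analysis" "HOL-Computational_Algebra.Polynomial"
begin

text \<open>Functions on {1,...,n} are modelled as vectors of type real^'n, with n = CARD('n).\<close>

definition ip :: "real^'n \<Rightarrow> real^'n \<Rightarrow> real" where
  "ip f g = (\<Sum>x\<in>UNIV. f $ x * g $ x) / real CARD('n)"

definition norm1 :: "real^'n \<Rightarrow> real" where
  "norm1 f = (\<Sum>x\<in>UNIV. \<bar>f $ x\<bar>) / real CARD('n)"

definition norm_inf :: "real^'n \<Rightarrow> real" where
  "norm_inf f = Max ((\<lambda>x. \<bar>f $ x\<bar>) ` UNIV)"

definition is_norm :: "(real^'n \<Rightarrow> real) \<Rightarrow> bool" where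
  "is_norm N \<longleftrightarrow> (\<forall>f. N f \<ge> 0) \<and> (\<forall>f. N f = 0 \<longleftrightarrow> f = 0)
     \<and> (\<forall>a f. N (a *\<^sub>R f) = \<bar>a\<bar> * N f) \<and> (\<forall>f g. N (f + g) \<le> N f + N g)"

definition dual_norm :: "(real^'n \<Rightarrow> real) \<Rightarrow> real^'n \<Rightarrow> real" where
  "dual_norm N \<phi> = Sup {ip f \<phi> | f. N f \<le> 1}"

definition qap_norm ::
  "(real^'n \<Rightarrow> real) \<Rightarrow> (real^'n) set \<Rightarrow> (real^'n \<Rightarrow> real^'n) \<Rightarrow> (real \<Rightarrow> real)
     \<Rightarrow> (nat \<Rightarrow> real) \<Rightarrow> bool" where
  "qap_norm N X D c C \<longleftrightarrow>
     is_norm N \<and> (\<forall>f. norm_inf f \<le> dual_norm N f) \<and> bounded X \<and>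
     (\<forall>e>0. c e > 0) \<and> strict_mono_on {0<..} c \<and> mono C \<and>
     (\<forall>f\<in>X. ip f (D f) \<le> 1) \<and>
     (\<forall>e>0. \<forall>f\<in>X. N f \<ge> e \<longrightarrow> ip f (D f) \<ge> c e) \<and>
     (\<forall>K\<ge>1. \<forall>fs. (\<forall>i<K. fs i \<in> X) \<longrightarrow>
         dual_norm N (\<chi> x. \<Prod>i<K. D (fs i) $ x) \<le> C K) \<and>
     span (D ` X) = UNIV"

definition Rprime :: "(nat \<Rightarrow> real) \<Rightarrow> real poly \<Rightarrow> real \<Rightarrow> real" where
  "Rprime C P x = (\<Sum>i\<le>degree P. (if i = 0 then 1 else C i) * \<bar>coeff P i\<bar> * x ^ i)"

definition rho' :: "(nat \<Rightarrow> real) \<Rightarrow> real \<Rightarrow> real \<Rightarrow> real \<Rightarrow> (real \<Rightarrow> real) \<Rightarrow> real" where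
  "rho' C C1 C2 \<delta> J = 2 * Inf {Rprime C P C2 | P.
       \<forall>x\<in>{-C1..C1}. \<bar>poly P x - J x\<bar> \<le> \<delta>}"

end

theory Submission
  imports Defs
begin

text \<open>Let G be the box [0, \<nu>] and K the set of y with |<y, D h>| \<le> c \<eta> for all h \<in> X.
  If f were not in G + K, a separating functional \<psi>, rescaled, would lie in the closed
  symmetric convex hull of D X (a bipolar argument), and the best point of the box against it
  would give <f, \<omega>> - <\<nu>, max \<omega> 0> \<ge> c \<eta> for some \<omega> in that hull. This is impossible:
  approximating max t 0 by a polynomial P on the range of \<theta> = \<omega> / c \<eta>, and bounding
  |<\<mu> - \<nu>, \<theta>^k>| by \<epsilon> C k (c \<eta>)^-k (the QAP bound on products of the D h survives the
  passage to the closed convex hull, one factor at a time, by multilinearity), we get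
  <f, \<theta>> - <\<nu>, max \<theta> 0> \<le> 3 \<delta> / 4 + \<epsilon> R'_P(1 / c \<eta>) < 1. So f = g + y with
  0 \<le> g \<le> \<nu>, and y = f - g lies in X with |<y, D y>| \<le> c \<eta>, whence N y \<le> \<eta> by the
  lower bound (ii) of the QAP-norm.\<close>

lemma ip_inner: "ip f g = inner f g / real CARD('n)" for f g :: "real^'n"
  by (simp add: ip_def inner_vec_def)

lemma ip_scaleR_left: "ip (a *\<^sub>R f) g = a * ip f g"
  and ip_scaleR_right: "ip f (a *\<^sub>R g) = a * ip f g"
  by (simp_all add: ip_inner)

lemma ip_minus_left: "ip (- f) g = - ip f g"
  by (simp add: ip_inner)

lemma ip_diff_left: "ip (f - f') g = ip f g - ip f' g"
  by (simp add: ip_inner inner_diff_left diff_divide_distrib)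

lemma ip_zero_left [simp]: "ip 0 g = 0"
  by (simp add: ip_def)

lemma abs_ip_le_norm_mult: "\<bar>ip f g\<bar> \<le> norm f * norm g"
proof -
  have "\<bar>ip f g\<bar> \<le> \<bar>inner f g\<bar>"
    by (simp add: ip_inner abs_div divide_le_eq mult_le_cancel_left1)
  then show ?thesis using Cauchy_Schwarz_ineq2 order_trans by blast
qed

lemma ip_mult_right: "ip f (\<chi> x. g $ x * h $ x) = ip g (\<chi> x. f $ x * h $ x)"
  unfolding ip_def by (simp add: mult_ac)

lemma ip_poly_right:
  "ip f (\<chi> x. poly P (\<theta> $ x)) = (\<Sum>i\<le>degree P. coeff P i * ip f (\<chi> x. \<theta> $ x ^ i))"
  by (simp add: ip_def poly_altdef sum_distrib_left sum_divide_distrib mult.left_commute)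
    (rule sum.swap)

lemma
  fixes g :: "real^'n"
  shows closed_slab: "closed {f. \<bar>ip f g\<bar> \<le> r}"
    and convex_slab: "convex {f. \<bar>ip f g\<bar> \<le> r}"
proof -
  have "ip f g = inner (g /\<^sub>R real CARD('n)) f" for f
    by (simp add: ip_inner inner_commute divide_inverse_commute)
  then have slab: "{f. \<bar>ip f g\<bar> \<le> r}
      = {f. inner (g /\<^sub>R real CARD('n)) f \<le> r} \<inter> {f. inner (g /\<^sub>R real CARD('n)) f \<ge> -r}"
    by (auto simp: abs_le_iff)
  show "closed {f. \<bar>ip f g\<bar> \<le> r}" "convex {f. \<bar>ip f g\<bar> \<le> r}"
    unfolding slab by (intro closed_Int closed_halfspace_le closed_halfspace_ge
        convex_Int convex_halfspace_le convex_halfspace_ge)+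
qed

locale abstract_norm =
  fixes N :: "real^'n \<Rightarrow> real"
  assumes is_norm: "is_norm N"
begin

lemma nonneg: "0 \<le> N f"
  using is_norm by (simp add: is_norm_def)

lemma eq_0_iff: "N f = 0 \<longleftrightarrow> f = 0"
  using is_norm by (simp add: is_norm_def)

lemma zero [simp]: "N 0 = 0"
  by (simp add: eq_0_iff)

lemma scaleR: "N (a *\<^sub>R f) = \<bar>a\<bar> * N f"
  using is_norm by (simp add: is_norm_def)

lemma triangle: "N (f + g) \<le> N f + N g"
  using is_norm by (simp add: is_norm_def)

lemma uminus [simp]: "N (- f) = N f"
  using scaleR[of "-1" f] by simp

lemma convex_on_UNIV: "convex_on UNIV N"
proof (rule convex_onI)
  fix t :: real and f g assume "0 < t" "t < 1"
  then show "N ((1 - t) *\<^sub>R f + t *\<^sub>R g) \<le> (1 - t) * N f + t * N g"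
    using triangle[of "(1 - t) *\<^sub>R f" "t *\<^sub>R g"] by (simp add: scaleR)
qed simp

lemma continuous_on: "continuous_on S N"
  using convex_on_continuous[OF open_UNIV convex_on_UNIV] continuous_on_subset by blast

lemma ex_pos_mult_norm_le: "\<exists>m>0. \<forall>f. m * norm f \<le> N f"
proof -
  obtain f0 :: "real^'n" where f0: "f0 \<in> sphere 0 1" "\<And>f. f \<in> sphere 0 1 \<Longrightarrow> N f0 \<le> N f"
    using continuous_attains_inf[of "sphere 0 1" N] continuous_on
    by (fastforce simp: sphere_eq_empty)
  have "N f0 * norm f \<le> N f" for f
  proof (cases "f = 0")
    case False
    then have "N f0 \<le> N ((1 / norm f) *\<^sub>R f)" by (intro f0(2)) simp
    then show ?thesis using False by (simp add: scaleR field_simps)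
  qed simp
  moreover have "N f0 > 0" using f0(1) nonneg[of f0] eq_0_iff[of f0] by auto
  ultimately show ?thesis by blast
qed

lemma bdd_above_dual: "bdd_above {ip f w | f. N f \<le> 1}"
proof -
  obtain m where m: "m > 0" "\<And>f. m * norm f \<le> N f" using ex_pos_mult_norm_le by blast
  have "ip f w \<le> norm w / m" if "N f \<le> 1" for f
  proof -
    have "norm f \<le> 1 / m" using m(2)[of f] that m(1) by (simp add: field_simps)
    then have "norm f * norm w \<le> norm w / m" by (simp add: mult_right_mono divide_inverse_commute)
    then show ?thesis using abs_ip_le_norm_mult[of f w] by linarith
  qed
  then show ?thesis unfolding bdd_above_def by blast
qed

lemma ip_le_dual_norm: "N f \<le> 1 \<Longrightarrow> ip f w \<le> dual_norm N w"
  unfolding dual_norm_def by (rule cSup_upper) (use bdd_above_dual in auto)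

lemma dual_norm_nonneg: "0 \<le> dual_norm N w"
  using ip_le_dual_norm[of 0 w] by simp

lemma ip_le_mult_dual_norm: "ip f w \<le> N f * dual_norm N w"
proof (cases "f = 0")
  case False
  then have pos: "N f > 0" using nonneg[of f] eq_0_iff[of f] by linarith
  have "ip ((1 / N f) *\<^sub>R f) w \<le> dual_norm N w"
    using pos by (intro ip_le_dual_norm) (simp add: scaleR)
  then show ?thesis using pos by (simp add: ip_scaleR_left field_simps)
qed (simp add: dual_norm_nonneg)

lemma abs_ip_le_mult_dual_norm: "\<bar>ip f w\<bar> \<le> N f * dual_norm N w"
  using ip_le_mult_dual_norm[of f w] ip_le_mult_dual_norm[of "- f" w]
  by (simp add: ip_minus_left)

end

section \<open>Polynomial approximation of the positive part\<close>

lemma ip_one_right: "(\<forall>x. 0 \<le> \<mu> $ x) \<Longrightarrow> ip \<mu> (\<chi> x. 1) = norm1 \<mu>"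
  by (simp add: ip_def norm1_def)

lemma norm1_nonneg: "0 \<le> norm1 f"
  by (simp add: norm1_def sum_nonneg)

lemma ip_le_ip_add:
  assumes "\<forall>x. 0 \<le> \<mu> $ x" "norm1 \<mu> \<le> 1" "\<forall>x. u $ x \<le> v $ x + e" "0 \<le> e"
  shows "ip \<mu> u \<le> ip \<mu> v + e"
proof -
  have "ip \<mu> u \<le> ip \<mu> (v + e *\<^sub>R (\<chi> x. 1))"
    unfolding ip_def using assms(1,3)
    by (intro divide_right_mono sum_mono mult_left_mono) (auto simp: mult.commute)
  also have "\<dots> = ip \<mu> v + e * norm1 \<mu>"
    by (simp add: ip_inner inner_add_right add_divide_distrib flip: ip_one_right[OF assms(1)])
  also have "\<dots> \<le> ip \<mu> v + e"
    using assms(2,4) by (simp add: mult_left_le)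
  finally show ?thesis .
qed

lemma ip_poly_le:
  assumes one: "\<bar>ip d (\<chi> x. 1)\<bar> \<le> 1"
    and powers: "\<forall>k\<ge>1. \<bar>ip d (\<chi> x. \<theta> $ x ^ k)\<bar> \<le> \<epsilon> * (C k * s ^ k)"
    and "0 \<le> \<epsilon>"
  shows "ip d (\<chi> x. poly P (\<theta> $ x)) \<le> \<bar>coeff P 0\<bar> + \<epsilon> * Rprime C P s"
proof -
  have "coeff P i * ip d (\<chi> x. \<theta> $ x ^ i)
      \<le> (if i = 0 then \<bar>coeff P 0\<bar> else 0) + \<epsilon> * ((if i = 0 then 1 else C i) * \<bar>coeff P i\<bar> * s ^ i)"
    for i
  proof -
    have "coeff P i * ip d (\<chi> x. \<theta> $ x ^ i) \<le> \<bar>coeff P i\<bar> * \<bar>ip d (\<chi> x. \<theta> $ x ^ i)\<bar>"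
      by (metis abs_ge_self abs_mult)
    also have "\<dots> \<le> \<bar>coeff P i\<bar> * (if i = 0 then 1 else \<epsilon> * (C i * s ^ i))"
      using one powers by (intro mult_left_mono) auto
    moreover have "0 \<le> \<epsilon> * \<bar>coeff P i\<bar>" using \<open>0 \<le> \<epsilon>\<close> by simp
    ultimately show ?thesis by (auto simp: mult_ac)
  qed
  then have "ip d (\<chi> x. poly P (\<theta> $ x)) \<le> (\<Sum>i\<le>degree P. (if i = 0 then \<bar>coeff P 0\<bar> else 0)
      + \<epsilon> * ((if i = 0 then 1 else C i) * \<bar>coeff P i\<bar> * s ^ i))"
    unfolding ip_poly_right by (intro sum_mono)
  also have "\<dots> = \<bar>coeff P 0\<bar> + \<epsilon> * Rprime C P s"
    by (simp add: sum.distrib Rprime_def sum_distrib_left)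
  finally show ?thesis .
qed

lemma ip_pos_part_gap_le:
  fixes \<mu> \<nu> f \<theta> :: "real^'n"
  assumes \<mu>: "\<forall>x. 0 \<le> \<mu> $ x" "norm1 \<mu> \<le> 1" and \<nu>: "\<forall>x. 0 \<le> \<nu> $ x" "norm1 \<nu> \<le> 1"
    and f: "\<forall>x. 0 \<le> f $ x \<and> f $ x \<le> \<mu> $ x"
    and P: "\<forall>y\<in>{-a..a}. \<bar>poly P y - max y 0\<bar> \<le> e"
    and \<theta>: "\<forall>x. \<bar>\<theta> $ x\<bar> \<le> a"
    and powers: "\<forall>k\<ge>1. \<bar>ip (\<mu> - \<nu>) (\<chi> x. \<theta> $ x ^ k)\<bar> \<le> \<epsilon> * (C k * s ^ k)"
    and "0 \<le> \<epsilon>"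
  shows "ip f \<theta> - ip \<nu> (\<chi> x. max (\<theta> $ x) 0) \<le> 3 * e + \<epsilon> * Rprime C P s"
proof -
  define \<theta>p where "\<theta>p = (\<chi> x. max (\<theta> $ x) 0)"
  define P\<theta> where "P\<theta> = (\<chi> x. poly P (\<theta> $ x))"
  have "0 \<le> a" using \<theta> abs_ge_zero order_trans by blast
  then have P0: "\<bar>coeff P 0\<bar> \<le> e" using P[rule_format, of 0] by (simp add: poly_0_coeff_0)
  have "\<bar>P\<theta> $ x - \<theta>p $ x\<bar> \<le> e" for x
    unfolding \<theta>p_def P\<theta>_def using P \<theta>[rule_format, of x] by (simp add: abs_le_iff)
  then have "\<forall>x. \<theta>p $ x \<le> P\<theta> $ x + e" "\<forall>x. P\<theta> $ x \<le> \<theta>p $ x + e" and "0 \<le> e"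
    using P0 by (smt (verit))+
  then have \<mu>P: "ip \<mu> \<theta>p \<le> ip \<mu> P\<theta> + e" and \<nu>P: "ip \<nu> P\<theta> \<le> ip \<nu> \<theta>p + e"
    using ip_le_ip_add \<mu> \<nu> by blast+
  have "f $ x * \<theta> $ x \<le> \<mu> $ x * \<theta>p $ x" for x
    unfolding \<theta>p_def using f mult_left_mono[of "\<theta> $ x" "max (\<theta> $ x) 0" "f $ x"]
      mult_right_mono[of "f $ x" "\<mu> $ x" "max (\<theta> $ x) 0"] by auto
  then have "ip f \<theta> \<le> ip \<mu> \<theta>p"
    unfolding ip_def by (intro divide_right_mono sum_mono) auto
  moreover have "\<bar>ip (\<mu> - \<nu>) (\<chi> x. 1)\<bar> \<le> 1"
    using \<mu> \<nu> norm1_nonneg[of \<mu>] norm1_nonneg[of \<nu>] by (simp add: ip_diff_left ip_one_right)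
  then have "ip \<mu> P\<theta> - ip \<nu> P\<theta> \<le> e + \<epsilon> * Rprime C P s"
    using ip_poly_le[OF _ powers \<open>0 \<le> \<epsilon>\<close>, of P] P0 by (simp add: P\<theta>_def ip_diff_left)
  ultimately show ?thesis using \<mu>P \<nu>P unfolding \<theta>p_def by linarith
qed

section \<open>Closed symmetric convex hulls and polars\<close>

definition sym_hull :: "'a::real_normed_vector set \<Rightarrow> 'a set" where
  "sym_hull \<Phi> = closure (convex hull (\<Phi> \<union> uminus ` \<Phi>))"

lemma closure_convex_hull_minimal:
  "S \<subseteq> T \<Longrightarrow> closed T \<Longrightarrow> convex T \<Longrightarrow> closure (convex hull S) \<subseteq> T"
  by (simp add: closure_minimal hull_minimal)

lemma closed_sym_hull: "closed (sym_hull \<Phi>)"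
  by (simp add: sym_hull_def)

lemma convex_sym_hull: "convex (sym_hull \<Phi>)"
  by (simp add: sym_hull_def convex_closure)

lemma sym_hull_superset: "\<Phi> \<union> uminus ` \<Phi> \<subseteq> sym_hull \<Phi>"
  unfolding sym_hull_def by (rule order_trans[OF hull_subset closure_subset])

lemma zero_mem_sym_hull:
  assumes "\<phi> \<in> \<Phi>" shows "0 \<in> sym_hull \<Phi>"
proof -
  have "\<phi> \<in> sym_hull \<Phi>" "- \<phi> \<in> sym_hull \<Phi>" using assms sym_hull_superset by blast+
  then have "(1/2) *\<^sub>R \<phi> + (1/2) *\<^sub>R (- \<phi>) \<in> sym_hull \<Phi>"
    by (intro convexD[OF convex_sym_hull]) auto
  then show ?thesis by simp
qed

lemma mem_cbox_abs_le_iff: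
  "v \<in> cbox (- (\<chi> _. B)) (\<chi> _. B) \<longleftrightarrow> (\<forall>x. \<bar>v $ x\<bar> \<le> B)" for v :: "real^'n"
  by (simp add: mem_box_cart abs_le_iff minus_le_iff all_conj_distrib conj_commute)

lemma sym_hull_abs_le:
  fixes \<Phi> :: "(real^'n) set"
  assumes "\<forall>\<phi>\<in>\<Phi>. \<forall>x. \<bar>\<phi> $ x\<bar> \<le> B" and "\<omega> \<in> sym_hull \<Phi>"
  shows "\<bar>\<omega> $ x\<bar> \<le> B"
proof -
  have "\<Phi> \<union> uminus ` \<Phi> \<subseteq> cbox (- (\<chi> _. B)) (\<chi> _. B)"
    using assms(1) by (auto simp: mem_cbox_abs_le_iff)
  then have "sym_hull \<Phi> \<subseteq> cbox (- (\<chi> _. B)) (\<chi> _. B)"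
    unfolding sym_hull_def by (intro closure_convex_hull_minimal) auto
  then show ?thesis using assms(2) mem_cbox_abs_le_iff by blast
qed

lemma mem_sym_hull_if_polar_le:
  fixes \<Phi> :: "(real^'n) set"
  assumes "\<Phi> \<noteq> {}" "0 < r" "0 < t"
    and polar: "\<And>y. \<forall>\<phi>\<in>\<Phi>. \<bar>ip y \<phi>\<bar> \<le> r \<Longrightarrow> ip y \<psi> \<le> t"
  shows "(r / t) *\<^sub>R \<psi> \<in> sym_hull \<Phi>"
proof (rule ccontr)
  define \<omega> where "\<omega> = (r / t) *\<^sub>R \<psi>"
  assume "\<omega> \<notin> sym_hull \<Phi>"
  then obtain a b where ab: "inner a \<omega> < b" "\<forall>x\<in>sym_hull \<Phi>. inner a x > b"
    using separating_hyperplane_closed_point[OF convex_sym_hull closed_sym_hull] by blast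
  have "b < 0" using ab(2) zero_mem_sym_hull assms(1) by force
  define n where "n = real CARD('n)"
  have "n > 0" unfolding n_def by simp
  define y where "y = (r * n / b) *\<^sub>R a"
  have ip_y: "ip y v = r * inner a v / b" for v
    using \<open>n > 0\<close> by (simp add: y_def ip_inner n_def[symmetric] inner_commute)
  have "\<bar>ip y \<phi>\<bar> \<le> r" if "\<phi> \<in> \<Phi>" for \<phi>
  proof -
    have "inner a \<phi> > b" "inner a (- \<phi>) > b" using ab(2) sym_hull_superset that by blast+
    then have "\<bar>inner a \<phi>\<bar> \<le> - b" by auto
    then have "r * \<bar>inner a \<phi>\<bar> \<le> r * (- b)" using \<open>0 < r\<close> mult_left_mono by fastforce
    then show ?thesis using \<open>b < 0\<close> \<open>0 < r\<close> by (simp add: ip_y abs_mult abs_div field_simps)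
  qed
  then have "ip y \<psi> \<le> t" by (rule polar[rule_format])
  moreover have "ip y \<psi> = (t / r) * ip y \<omega>"
    using assms(2,3) by (simp add: \<omega>_def ip_scaleR_right)
  moreover have "ip y \<omega> > r"
    using ab(1) \<open>b < 0\<close> \<open>0 < r\<close> by (simp add: ip_y neg_less_divide_eq mult.commute)
  ultimately show False using assms(2,3) by (simp add: field_simps)
qed

lemma prod_lessThan_fun_upd:
  fixes fs :: "nat \<Rightarrow> real^'n" and k :: nat
  assumes "j < k"
  shows "(\<Prod>i<k. (fs(j := w)) i $ x) = w $ x * (\<Prod>i\<in>{..<k} - {j}. fs i $ x)"
proof -
  have "(\<Prod>i<k. (fs(j := w)) i $ x) = (fs(j := w)) j $ x * (\<Prod>i\<in>{..<k} - {j}. (fs(j := w)) i $ x)"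
    using assms by (intro prod.remove) auto
  also have "(\<Prod>i\<in>{..<k} - {j}. (fs(j := w)) i $ x) = (\<Prod>i\<in>{..<k} - {j}. fs i $ x)"
    by (intro prod.cong) auto
  finally show ?thesis by simp
qed

lemma abs_ip_prod_le_closure_convex_hull:
  fixes S :: "(real^'n) set" and a :: "real^'n" and k :: nat
  assumes bound: "\<And>gs. \<forall>i<k. gs i \<in> S \<Longrightarrow> \<bar>ip a (\<chi> x. \<Prod>i<k. gs i $ x)\<bar> \<le> B"
    and fs: "\<forall>i<k. fs i \<in> closure (convex hull S)"
  shows "\<bar>ip a (\<chi> x. \<Prod>i<k. fs i $ x)\<bar> \<le> B"
proof -
  let ?H = "closure (convex hull S)"
  \<comment> \<open>Replace the factors by points of the hull one slot at a time; in each slot the bound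
    defines a closed slab, so it passes from S to its closed convex hull.\<close>
  have "j \<le> k \<Longrightarrow> \<forall>fs :: nat \<Rightarrow> real^'n.
      (\<forall>i<j. fs i \<in> ?H) \<and> (\<forall>i. j \<le> i \<and> i < k \<longrightarrow> fs i \<in> S) \<longrightarrow> \<bar>ip a (\<chi> x. \<Prod>i<k. fs i $ x)\<bar> \<le> B" for j :: nat
  proof (induction j)
    case 0
    then show ?case using bound by auto
  next
    case (Suc j)
    show ?case
    proof (intro allI impI)
      fix fs assume fs: "(\<forall>i<Suc j. fs i \<in> ?H) \<and> (\<forall>i. Suc j \<le> i \<and> i < k \<longrightarrow> fs i \<in> S)"
      define R where "R = (\<chi> x. \<Prod>i\<in>{..<k} - {j}. fs i $ x)"
      have slot: "\<bar>ip a (\<chi> x. \<Prod>i<k. (fs(j := w)) i $ x)\<bar> = \<bar>ip w (\<chi> x. a $ x * R $ x)\<bar>" for w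
      proof -
        have "(\<chi> x. \<Prod>i<k. (fs(j := w)) i $ x) = (\<chi> x. w $ x * R $ x)"
          using Suc.prems unfolding R_def by (simp only: prod_lessThan_fun_upd Suc_le_eq vec_lambda_beta)
        then show ?thesis by (simp add: ip_mult_right)
      qed
      have "S \<subseteq> {w. \<bar>ip w (\<chi> x. a $ x * R $ x)\<bar> \<le> B}"
      proof
        fix w assume "w \<in> S"
        then have "\<bar>ip a (\<chi> x. \<Prod>i<k. (fs(j := w)) i $ x)\<bar> \<le> B"
          using Suc fs by (intro Suc.IH[rule_format]) auto
        then show "w \<in> {w. \<bar>ip w (\<chi> x. a $ x * R $ x)\<bar> \<le> B}" unfolding slot by simp
      qed
      then have "?H \<subseteq> {w. \<bar>ip w (\<chi> x. a $ x * R $ x)\<bar> \<le> B}"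
        by (intro closure_convex_hull_minimal closed_slab convex_slab)
      then show "\<bar>ip a (\<chi> x. \<Prod>i<k. fs i $ x)\<bar> \<le> B"
        using fs slot[of "fs j"] by auto
    qed
  qed
  from this[of k] show ?thesis using fs by auto
qed

lemma abs_ip_prod_le_sym_hull:
  fixes \<Phi> :: "(real^'n) set" and a :: "real^'n" and k :: nat
  assumes bound: "\<And>gs. \<forall>i<k. gs i \<in> \<Phi> \<Longrightarrow> \<bar>ip a (\<chi> x. \<Prod>i<k. gs i $ x)\<bar> \<le> B"
    and fs: "\<forall>i<k. fs i \<in> sym_hull \<Phi>"
  shows "\<bar>ip a (\<chi> x. \<Prod>i<k. fs i $ x)\<bar> \<le> B"
proof -
  have "\<bar>ip a (\<chi> x. \<Prod>i<k. gs i $ x)\<bar> \<le> B" if gs: "\<forall>i<k. gs i \<in> \<Phi> \<union> uminus ` \<Phi>" for gs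
  proof -
    define s where "s i = (if gs i \<in> \<Phi> then 1 else -1 :: real)" for i
    have "(\<Prod>i<k. s i) * (\<Prod>i<k. (s i *\<^sub>R gs i) $ x) = (\<Prod>i<k. (s i * s i) * gs i $ x)" for x
      by (simp add: prod.distrib)
    moreover have "s i * s i = 1" for i by (simp add: s_def)
    ultimately have "(\<chi> x. \<Prod>i<k. gs i $ x) = (\<Prod>i<k. s i) *\<^sub>R (\<chi> x. \<Prod>i<k. (s i *\<^sub>R gs i) $ x)"
      by (simp add: vec_eq_iff)
    moreover have "\<bar>\<Prod>i<k. s i\<bar> = 1"
      unfolding abs_prod by (rule prod.neutral) (simp add: s_def)
    moreover have "\<forall>i<k. s i *\<^sub>R gs i \<in> \<Phi>"
      using gs by (auto simp: s_def)
    then have "\<bar>ip a (\<chi> x. \<Prod>i<k. (s i *\<^sub>R gs i) $ x)\<bar> \<le> B" by (rule bound)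
    ultimately show ?thesis by (simp add: ip_scaleR_right abs_mult)
  qed
  then show ?thesis
    using fs unfolding sym_hull_def by (rule abs_ip_prod_le_closure_convex_hull)
qed

lemma pos_part_scaleR:
  fixes \<psi> :: "real^'n"
  shows "0 \<le> s \<Longrightarrow> (\<chi> x. max ((s *\<^sub>R \<psi>) $ x) 0) = s *\<^sub>R (\<chi> x. max (\<psi> $ x) 0)"
  by (simp add: vec_eq_iff max_mult_distrib_left)

lemma closed_polar: "closed {y. \<forall>\<phi>\<in>\<Phi>. \<bar>ip y \<phi>\<bar> \<le> r}"
  and convex_polar: "convex {y. \<forall>\<phi>\<in>\<Phi>. \<bar>ip y \<phi>\<bar> \<le> r}"
proof -
  have "{y. \<forall>\<phi>\<in>\<Phi>. \<bar>ip y \<phi>\<bar> \<le> r} = (\<Inter>\<phi>\<in>\<Phi>. {y. \<bar>ip y \<phi>\<bar> \<le> r})" by auto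
  then show "closed {y. \<forall>\<phi>\<in>\<Phi>. \<bar>ip y \<phi>\<bar> \<le> r}" "convex {y. \<forall>\<phi>\<in>\<Phi>. \<bar>ip y \<phi>\<bar> \<le> r}"
    by (simp_all add: closed_INT closed_slab convex_INT convex_slab)
qed

lemma ex_ip_separating_sums:
  fixes G K :: "(real^'n) set"
  assumes "compact G" "convex G" "closed K" "convex K" "f \<notin> (\<Union>g\<in>G. \<Union>y\<in>K. {g + y})"
  shows "\<exists>\<psi>. \<forall>g\<in>G. \<forall>y\<in>K. ip g \<psi> + ip y \<psi> < ip f \<psi>"
proof -
  have "convex (\<Union>g\<in>G. \<Union>y\<in>K. {g + y})" "closed (\<Union>g\<in>G. \<Union>y\<in>K. {g + y})"
    using assms(1-4) by (simp_all add: convex_sums compact_closed_sums)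
  from separating_hyperplane_closed_point[OF this assms(5)]
  obtain a b where ab: "inner a f < b" "\<forall>z\<in>(\<Union>g\<in>G. \<Union>y\<in>K. {g + y}). b < inner a z"
    by blast
  have "ip g (- a) + ip y (- a) < ip f (- a)" if "g \<in> G" "y \<in> K" for g y
  proof -
    have "b < inner a (g + y)" using ab(2) that by blast
    then have "inner (g + y) (- a) / real CARD('n) < inner f (- a) / real CARD('n)"
      using ab(1) by (intro divide_strict_right_mono) (simp_all add: inner_commute)
    then show ?thesis by (simp only: ip_inner inner_add_left add_divide_distrib)
  qed
  then show ?thesis by blast
qed
lemma ex_box_plus_polar:
  fixes \<Phi> :: "(real^'n) set" and \<nu> f :: "real^'n"
  assumes "\<Phi> \<noteq> {}" "0 < r" "\<forall>x. 0 \<le> \<nu> $ x"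
    and gap: "\<And>\<omega>. \<omega> \<in> sym_hull \<Phi> \<Longrightarrow> ip f \<omega> - ip \<nu> (\<chi> x. max (\<omega> $ x) 0) < r"
  shows "\<exists>g. (\<forall>x. 0 \<le> g $ x \<and> g $ x \<le> \<nu> $ x) \<and> (\<forall>\<phi>\<in>\<Phi>. \<bar>ip (f - g) \<phi>\<bar> \<le> r)"
proof (rule ccontr)
  define K where "K = {y. \<forall>\<phi>\<in>\<Phi>. \<bar>ip y \<phi>\<bar> \<le> r}"
  assume no_decomposition: "\<not> ?thesis"
  have f_notin: "f \<notin> (\<Union>g\<in>cbox 0 \<nu>. \<Union>y\<in>K. {g + y})"
  proof
    assume "f \<in> (\<Union>g\<in>cbox 0 \<nu>. \<Union>y\<in>K. {g + y})"
    then obtain g y where "g \<in> cbox 0 \<nu>" "y \<in> K" "f - g = y" by force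
    then show False using no_decomposition by (auto simp: K_def mem_box_cart)
  qed
  have "closed K" "convex K" unfolding K_def by (rule closed_polar convex_polar)+
  from ex_ip_separating_sums[OF compact_cbox convex_box(1) this f_notin]
  obtain \<psi> where sep: "\<forall>g\<in>cbox 0 \<nu>. \<forall>y\<in>K. ip g \<psi> + ip y \<psi> < ip f \<psi>"
    by blast
  \<comment> \<open>Over the box, the functional \<psi> is maximised by \<nu> restricted to the support
    of the positive part of \<psi>.\<close>
  define m where "m = ip f \<psi> - ip \<nu> (\<chi> x. max (\<psi> $ x) 0)"
  have "ip (\<chi> x. if \<psi> $ x > 0 then \<nu> $ x else 0) \<psi> = ip \<nu> (\<chi> x. max (\<psi> $ x) 0)"
    unfolding ip_def by (intro arg_cong[where f="\<lambda>s. s / _"] sum.cong) auto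
  moreover have "(\<chi> x. if \<psi> $ x > 0 then \<nu> $ x else 0) \<in> cbox 0 \<nu>"
    using assms(3) by (simp add: mem_box_cart)
  ultimately have below_m: "ip y \<psi> < m" if "y \<in> K" for y
    using sep that unfolding m_def by fastforce
  have "0 \<in> K" using \<open>0 < r\<close> by (simp add: K_def)
  then have "0 < m" using below_m by fastforce
  then have "(r / m) *\<^sub>R \<psi> \<in> sym_hull \<Phi>"
    using assms(1,2) below_m by (intro mem_sym_hull_if_polar_le) (auto simp: K_def less_imp_le)
  moreover have "ip f ((r / m) *\<^sub>R \<psi>) - ip \<nu> (\<chi> x. max (((r / m) *\<^sub>R \<psi>) $ x) 0) = (r / m) * m"
    using \<open>0 < m\<close> \<open>0 < r\<close> unfolding m_def
    by (simp only: pos_part_scaleR less_imp_le divide_pos_pos ip_scaleR_right right_diff_distrib)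
  ultimately show False using gap \<open>0 < m\<close> by fastforce
qed

section \<open>QAP-norms\<close>

lemma
  assumes "qap_norm N X D c C"
  shows qap_norm_abstract_norm: "abstract_norm N"
    and qap_norm_norm_inf_le: "norm_inf f \<le> dual_norm N f"
    and qap_norm_c_pos: "0 < e \<Longrightarrow> 0 < c e"
    and qap_norm_c_strict_mono: "strict_mono_on {0<..} c"
    and qap_norm_c_le_ip: "0 < e \<Longrightarrow> h \<in> X \<Longrightarrow> e \<le> N h \<Longrightarrow> c e \<le> ip h (D h)"
    and qap_norm_dual_prod_le:
      "1 \<le> k \<Longrightarrow> \<forall>i<k. hs i \<in> X \<Longrightarrow> dual_norm N (\<chi> x. \<Prod>i<k. D (hs i) $ x) \<le> C k"
  using assms by (simp_all add: qap_norm_def abstract_norm_def)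

lemma qap_norm_C_nonneg:
  assumes "qap_norm N X D c C" "h \<in> X" "1 \<le> k"
  shows "0 \<le> C k"
proof -
  interpret abstract_norm N using assms(1) by (rule qap_norm_abstract_norm)
  have "dual_norm N (\<chi> x. \<Prod>i<k. D ((\<lambda>_. h) i) $ x) \<le> C k"
    using assms by (intro qap_norm_dual_prod_le) auto
  then show ?thesis using dual_norm_nonneg order_trans by blast
qed

lemma qap_norm_abs_le_C1:
  assumes "qap_norm N X D c C" "h \<in> X"
  shows "\<bar>D h $ x\<bar> \<le> C 1"
proof -
  have "\<bar>D h $ x\<bar> \<le> norm_inf (D h)" unfolding norm_inf_def by (rule Max_ge) auto
  also have "\<dots> \<le> dual_norm N (D h)" using assms(1) by (rule qap_norm_norm_inf_le)
  also have "dual_norm N (D h) = dual_norm N (\<chi> x. \<Prod>i<(1::nat). D ((\<lambda>_. h) i) $ x)" by simp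
  also have "\<dots> \<le> C 1" using assms by (intro qap_norm_dual_prod_le) auto
  finally show ?thesis .
qed

lemma qap_norm_abs_ip_power_le:
  assumes qap: "qap_norm N X D c C" and "\<omega> \<in> sym_hull (D ` X)" "1 \<le> k"
  shows "\<bar>ip a (\<chi> x. \<omega> $ x ^ k)\<bar> \<le> N a * C k"
proof -
  interpret abstract_norm N using qap by (rule qap_norm_abstract_norm)
  have bound: "\<bar>ip a (\<chi> x. \<Prod>i<k. gs i $ x)\<bar> \<le> N a * C k" if "\<forall>i<k. gs i \<in> D ` X" for gs
  proof -
    define hs where "hs i = inv_into X D (gs i)" for i
    have "\<forall>i<k. hs i \<in> X"
      using that by (auto simp: hs_def inv_into_into)
    then have "dual_norm N (\<chi> x. \<Prod>i<k. D (hs i) $ x) \<le> C k"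
      by (rule qap_norm_dual_prod_le[OF qap \<open>1 \<le> k\<close>])
    moreover have "(\<Prod>i<k. D (hs i) $ x) = (\<Prod>i<k. gs i $ x)" for x
      using that by (intro prod.cong) (auto simp: hs_def f_inv_into_f)
    ultimately have "dual_norm N (\<chi> x. \<Prod>i<k. gs i $ x) \<le> C k" by simp
    then have "N a * dual_norm N (\<chi> x. \<Prod>i<k. gs i $ x) \<le> N a * C k"
      by (rule mult_left_mono[OF _ nonneg])
    then show ?thesis using abs_ip_le_mult_dual_norm by (rule order_trans[rotated])
  qed
  have "\<forall>i<k. (\<lambda>_. \<omega>) i \<in> sym_hull (D ` X)" using assms(2) by simp
  from abs_ip_prod_le_sym_hull[OF bound this]
  have "\<bar>ip a (\<chi> x. \<Prod>i<k. ((\<lambda>_. \<omega>) i) $ x)\<bar> \<le> N a * C k" .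
  then show ?thesis by simp
qed

lemma qap_norm_le_if_abs_ip_le:
  assumes "qap_norm N X D c C" "y \<in> X" "0 < \<eta>" "\<bar>ip y (D y)\<bar> \<le> c \<eta>"
  shows "N y \<le> \<eta>"
proof (rule ccontr)
  assume "\<not> N y \<le> \<eta>"
  then have "c (N y) \<le> ip y (D y)"
    using assms(1-3) by (intro qap_norm_c_le_ip) auto
  moreover have "c \<eta> < c (N y)"
    using \<open>\<not> N y \<le> \<eta>\<close> assms(3)
    by (intro strict_mono_onD[OF qap_norm_c_strict_mono[OF assms(1)]]) auto
  ultimately show False using assms(4) by linarith
qed

lemma ex_poly_Rprime_less:
  fixes J :: "real \<Rightarrow> real"
  assumes "continuous_on {-a..a} J" "0 < e" "rho' C a s e J < 2 * b"
  shows "\<exists>P. (\<forall>y\<in>{-a..a}. \<bar>poly P y - J y\<bar> \<le> e) \<and> Rprime C P s < b"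
proof -
  obtain q where q: "real_polynomial_function q" "\<And>y. y \<in> {-a..a} \<Longrightarrow> \<bar>J y - q y\<bar> < e"
    using Stone_Weierstrass_real_polynomial_function[OF compact_Icc assms(1,2)] by blast
  obtain \<beta> n where "q = (\<lambda>y. \<Sum>i\<le>n. \<beta> i * y ^ i)"
    using q(1) real_polynomial_function_iff_sum by blast
  then have "poly (\<Sum>i\<le>n. monom (\<beta> i) i) y = q y" for y
    by (simp add: poly_sum poly_monom)
  then have "\<forall>y\<in>{-a..a}. \<bar>poly (\<Sum>i\<le>n. monom (\<beta> i) i) y - J y\<bar> \<le> e"
    using q(2) by (simp add: abs_minus_commute less_imp_le)
  then have ne: "{Rprime C P s | P. \<forall>y\<in>{-a..a}. \<bar>poly P y - J y\<bar> \<le> e} \<noteq> {}" by blast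
  have lt: "Inf {Rprime C P s | P. \<forall>y\<in>{-a..a}. \<bar>poly P y - J y\<bar> \<le> e} < b"
    using assms(3) by (simp add: rho'_def)
  show ?thesis using cInf_lessD[OF ne lt] by force
qed

lemma qap_norm_pos_part_gap_less:
  fixes \<mu> \<nu> f \<omega> :: "real^'n"
  assumes qap: "qap_norm N X D c C" and "h \<in> X"
    and \<mu>: "\<forall>x. 0 \<le> \<mu> $ x" "norm1 \<mu> \<le> 1" and \<nu>: "\<forall>x. 0 \<le> \<nu> $ x" "norm1 \<nu> \<le> 1"
    and f: "\<forall>x. 0 \<le> f $ x \<and> f $ x \<le> \<mu> $ x"
    and "0 < r"
    and P: "\<forall>y\<in>{- (C 1 / r)..C 1 / r}. \<bar>poly P y - max y 0\<bar> \<le> e"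
    and "N (\<mu> - \<nu>) \<le> \<epsilon>" "0 \<le> \<epsilon>"
    and small: "3 * e + \<epsilon> * Rprime C P (1 / r) < 1"
    and \<omega>: "\<omega> \<in> sym_hull (D ` X)"
  shows "ip f \<omega> - ip \<nu> (\<chi> x. max (\<omega> $ x) 0) < r"
proof -
  interpret abstract_norm N using qap by (rule qap_norm_abstract_norm)
  define \<theta> where "\<theta> = (1 / r) *\<^sub>R \<omega>"
  have "\<bar>\<omega> $ x\<bar> \<le> C 1" for x
    using \<omega> qap_norm_abs_le_C1[OF qap] by (intro sym_hull_abs_le) auto
  then have \<theta>_le: "\<forall>x. \<bar>\<theta> $ x\<bar> \<le> C 1 / r"
    using \<open>0 < r\<close> by (simp add: \<theta>_def abs_mult divide_right_mono)
  have "\<bar>ip (\<mu> - \<nu>) (\<chi> x. \<theta> $ x ^ k)\<bar> \<le> \<epsilon> * (C k * (1 / r) ^ k)" if "1 \<le> k" for k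
  proof -
    have "(\<chi> x. \<theta> $ x ^ k) = (1 / r) ^ k *\<^sub>R (\<chi> x. \<omega> $ x ^ k)"
      by (simp add: \<theta>_def vec_eq_iff power_divide)
    then have "\<bar>ip (\<mu> - \<nu>) (\<chi> x. \<theta> $ x ^ k)\<bar> = (1 / r) ^ k * \<bar>ip (\<mu> - \<nu>) (\<chi> x. \<omega> $ x ^ k)\<bar>"
      using \<open>0 < r\<close> by (simp add: ip_scaleR_right abs_mult)
    also have "\<dots> \<le> (1 / r) ^ k * (N (\<mu> - \<nu>) * C k)"
      using qap_norm_abs_ip_power_le[OF qap \<omega> that] \<open>0 < r\<close> by (intro mult_left_mono) auto
    also have "\<dots> \<le> (1 / r) ^ k * (\<epsilon> * C k)"
      using qap_norm_C_nonneg[OF qap \<open>h \<in> X\<close> that] \<open>0 < r\<close> \<open>N (\<mu> - \<nu>) \<le> \<epsilon>\<close>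
      by (intro mult_left_mono mult_right_mono) auto
    finally show ?thesis by (simp add: mult_ac)
  qed
  then have "ip f \<theta> - ip \<nu> (\<chi> x. max (\<theta> $ x) 0) < 1"
    using ip_pos_part_gap_le[OF \<mu> \<nu> f P \<theta>_le _ \<open>0 \<le> \<epsilon>\<close>] small by fastforce
  moreover have "\<omega> = r *\<^sub>R \<theta>" using \<open>0 < r\<close> by (simp add: \<theta>_def)
  then have "ip f \<omega> - ip \<nu> (\<chi> x. max (\<omega> $ x) 0) = r * (ip f \<theta> - ip \<nu> (\<chi> x. max (\<theta> $ x) 0))"
    using \<open>0 < r\<close> by (simp only: pos_part_scaleR less_imp_le ip_scaleR_right right_diff_distrib)
  ultimately show ?thesis using \<open>0 < r\<close> by simp
qed

lemma qap_norm_ex_close_below: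
  fixes \<mu> \<nu> f :: "real^'n"
  assumes qap: "qap_norm N X D c C" and X: "X = {h. \<forall>x. \<bar>h $ x\<bar> \<le> max (\<mu> $ x) (\<nu> $ x)}"
    and \<mu>: "\<forall>x. 0 \<le> \<mu> $ x" "norm1 \<mu> \<le> 1" and \<nu>: "\<forall>x. 0 \<le> \<nu> $ x" "norm1 \<nu> \<le> 1"
    and f: "\<forall>x. 0 \<le> f $ x \<and> f $ x \<le> \<mu> $ x"
    and "0 < \<eta>"
    and P: "\<forall>y\<in>{- (C 1 / c \<eta>)..C 1 / c \<eta>}. \<bar>poly P y - max y 0\<bar> \<le> e"
    and "N (\<mu> - \<nu>) \<le> \<epsilon>" "0 \<le> \<epsilon>"
    and small: "3 * e + \<epsilon> * Rprime C P (1 / c \<eta>) < 1"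
  shows "\<exists>g. (\<forall>x. 0 \<le> g $ x \<and> g $ x \<le> \<nu> $ x) \<and> N (f - g) \<le> \<eta>"
proof -
  have "0 \<in> X" using \<mu> by (simp add: X le_max_iff_disj)
  have "0 < c \<eta>" using qap_norm_c_pos[OF qap \<open>0 < \<eta>\<close>] .
  have gap: "ip f \<omega> - ip \<nu> (\<chi> x. max (\<omega> $ x) 0) < c \<eta>" if "\<omega> \<in> sym_hull (D ` X)" for \<omega>
    using qap_norm_pos_part_gap_less[OF qap \<open>0 \<in> X\<close> \<mu> \<nu> f \<open>0 < c \<eta>\<close> P assms(10,11) small that] .
  have "D ` X \<noteq> {}" using \<open>0 \<in> X\<close> by blast
  from ex_box_plus_polar[OF this \<open>0 < c \<eta>\<close> \<nu>(1) gap]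
  obtain g where g: "\<forall>x. 0 \<le> g $ x \<and> g $ x \<le> \<nu> $ x"
    and "\<forall>\<phi>\<in>D ` X. \<bar>ip (f - g) \<phi>\<bar> \<le> c \<eta>"
    by blast
  moreover have "\<bar>f $ x - g $ x\<bar> \<le> max (\<mu> $ x) (\<nu> $ x)" for x
    using f[rule_format, of x] g[rule_format, of x] by (simp add: abs_le_iff le_max_iff_disj) linarith
  then have "f - g \<in> X" by (simp add: X)
  ultimately have "N (f - g) \<le> \<eta>"
    by (intro qap_norm_le_if_abs_ip_le[OF qap _ \<open>0 < \<eta>\<close>]) auto
  then show ?thesis using g by blast
qed

lemma ex_poly_approx_pos_part:
  assumes "0 < \<delta>" "\<delta> < 1" "0 < \<epsilon>" "\<epsilon> = \<delta> / (2 * rho' C a s (\<delta> / 4) (\<lambda>y. max y 0))"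
  shows "\<exists>P. (\<forall>y\<in>{-a..a}. \<bar>poly P y - max y 0\<bar> \<le> \<delta> / 4) \<and> 3 * (\<delta> / 4) + \<epsilon> * Rprime C P s < 1"
proof -
  define \<rho> where "\<rho> = rho' C a s (\<delta> / 4) (\<lambda>y. max y 0)"
  have "0 < \<rho>" using assms(1,3,4) by (simp add: \<rho>_def zero_less_divide_iff)
  moreover have "1 < 4 / \<delta> - 3" using assms(1,2) by (simp add: less_divide_eq)
  ultimately have "rho' C a s (\<delta> / 4) (\<lambda>y. max y 0) < 2 * ((4 / \<delta> - 3) * \<rho> / 2)"
    using mult_strict_right_mono[of 1 "4 / \<delta> - 3" \<rho>] by (simp add: \<rho>_def)
  moreover have "continuous_on {-a..a} (\<lambda>y::real. max y 0)" by (intro continuous_intros)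
  moreover have "0 < \<delta> / 4" using assms(1) by simp
  ultimately obtain P where P: "\<forall>y\<in>{-a..a}. \<bar>poly P y - max y 0\<bar> \<le> \<delta> / 4"
    and "Rprime C P s < (4 / \<delta> - 3) * \<rho> / 2"
    using ex_poly_Rprime_less by blast
  then have "\<epsilon> * Rprime C P s < \<epsilon> * ((4 / \<delta> - 3) * \<rho> / 2)"
    using assms(3) by simp
  also have "\<dots> = 1 - 3 * (\<delta> / 4)"
    using \<open>0 < \<rho>\<close> assms(1) by (simp add: assms(4) \<rho>_def[symmetric] field_simps)
  finally show ?thesis using P by (intro exI[of _ P]) simp
qed

theorem theorem4p11:
  fixes \<mu> \<nu> :: "real^'n" and N :: "real^'n \<Rightarrow> real" and D :: "real^'n \<Rightarrow> real^'n"
    and c :: "real \<Rightarrow> real" and C :: "nat \<Rightarrow> real" and \<eta> \<delta> \<epsilon> :: real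
    and X :: "(real^'n) set" and J :: "real \<Rightarrow> real"
  assumes "\<forall>x. \<mu> $ x \<ge> 0" and "\<forall>x. \<nu> $ x \<ge> 0"
    and "norm1 \<mu> \<le> 1" and "norm1 \<nu> \<le> 1"
    and "\<eta> > 0" and "\<delta> > 0" and "\<delta> < 1"
    and X_def: "X = {f. \<forall>x. \<bar>f $ x\<bar> \<le> max (\<mu> $ x) (\<nu> $ x)}"
    and "qap_norm N X D c C"
    and J_def: "J = (\<lambda>x. (x + \<bar>x\<bar>) / 2)"
    and eps_def: "\<epsilon> = \<delta> / (2 * rho' C (C 1 / c \<eta>) (1 / c \<eta>) (\<delta> / 4) J)"
    and "N (\<mu> - \<nu>) \<le> \<epsilon>"
  shows "\<forall>f. (\<forall>x. 0 \<le> f $ x \<and> f $ x \<le> \<mu> $ x) \<longrightarrow>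
           (\<exists>g. (\<forall>x. 0 \<le> g $ x \<and> g $ x \<le> \<nu> $ x / (1 - \<delta>)) \<and> N (f - g) \<le> \<eta>)"
proof (intro allI impI)
  fix f :: "real^'n" assume f: "\<forall>x. 0 \<le> f $ x \<and> f $ x \<le> \<mu> $ x"
  interpret abstract_norm N using assms(9) by (rule qap_norm_abstract_norm)
  obtain g where g: "\<forall>x. 0 \<le> g $ x \<and> g $ x \<le> \<nu> $ x" "N (f - g) \<le> \<eta>"
  proof (cases "0 < \<epsilon>")
    case False
    then have "N (\<mu> - \<nu>) = 0" using assms(12) nonneg[of "\<mu> - \<nu>"] by linarith
    then have "\<mu> = \<nu>" by (simp add: eq_0_iff)
    then show ?thesis using f assms(5) that[of f] by simp
  next
    case True
    have "J = (\<lambda>y. max y 0)" by (auto simp: J_def max_def)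
    then obtain P where P: "\<forall>y\<in>{- (C 1 / c \<eta>)..C 1 / c \<eta>}. \<bar>poly P y - max y 0\<bar> \<le> \<delta> / 4"
      and small: "3 * (\<delta> / 4) + \<epsilon> * Rprime C P (1 / c \<eta>) < 1"
      using ex_poly_approx_pos_part[OF assms(6,7) True] eps_def by blast
    show ?thesis
      using that qap_norm_ex_close_below[OF assms(9,8,1,3,2,4) f assms(5) P assms(12) less_imp_le[OF True] small] by blast
  qed
  have "\<nu> $ x \<le> \<nu> $ x / (1 - \<delta>)" for x
    using assms(2,6,7) by (simp add: le_divide_eq mult_left_le)
  then show "\<exists>g. (\<forall>x. 0 \<le> g $ x \<and> g $ x \<le> \<nu> $ x / (1 - \<delta>)) \<and> N (f - g) \<le> \<eta>"
    using g by (intro exI[of _ g]) (auto intro: order.trans)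
qed

end
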